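(* Let $0<p<\infty$, $0<q\le\infty$ and $s>\max\{0,1/p-1\}$. Then \[M(B^s_{p,q})\hookrightarrow M^s_{p,q}\hookrightarrow B^s_{p,q,\mathrm{unif}}.\]
   Context: Besov spaces: $B^s_{p,q}=B^s_{p,q}(\mathbb R)$ is the inhomogeneous Besov space, with quasi-norm \[\|f\|_{L^p}+\Big(\int_{|h|\le1}|h|^{-sq}\|\Delta^m_hf\|_{L^p}^q\,dh/|h|\Big)^{1/q},\] where $m>s$ is an integer and $\Delta_h^mf(x)=\sum_{j=0}^m(-1)^{m-j}\binom mj f(x+jh)$. Multipliers: $M(X)$ is the set of measurable $g$ with $\|g\|_{M(X)}=\sup_{\|f\|_X\le1}\|gf\|_X<\infty$. Auxiliary function: let $\psi\in C_0^\infty(\mathbb R)$ be non-negative with $\sum_{z\in\mathbb Z}\psi(\cdot-z)\equiv1$ and $\operatorname{supp}\psi=[-1,1]$. Auxiliary spaces: \[B^s_{p,q,\mathrm{unif}}=\{f\in L^1_{\mathrm{loc}}:\ \sup_{z\in\mathbb Z}\|f\psi(\cdot-z)\|_{B^s_{p,q}}<\infty\},\] \[M^s_{p,q}=\Big\{f\in L^1_{\mathrm{loc}}:\ \sup_{\|\{c_z\}\|_{\ell^p(\mathbb Z)}\le1}\Big\|f\sum_{z\in\mathbb Z}c_z\psi(\cdot-z)\Big\|_{B^s_{p,q}}<\infty\Big\},\] each with the quasi-norm given by the corresponding supremum. Notation: $X\hookrightarrow Y$ denotes continuous embedding. *)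

theory Defs
  imports "HOL-Analysis.Analysis"
begin

definition epow :: "ennreal \<Rightarrow> real \<Rightarrow> ennreal" where
  "epow x r = (if x = \<infinity> then \<infinity> else ennreal (enn2real x powr r))"

definition fdiff :: "nat \<Rightarrow> real \<Rightarrow> (real \<Rightarrow> real) \<Rightarrow> real \<Rightarrow> real" where
  "fdiff m h f x = (\<Sum>j=0..m. (-1) ^ (m - j) * real (m choose j) * f (x + real j * h))"

definition Lp_qnorm :: "real \<Rightarrow> (real \<Rightarrow> real) \<Rightarrow> ennreal" where
  "Lp_qnorm p f = epow (\<integral>\<^sup>+ x. ennreal (\<bar>f x\<bar> powr p) \<partial>lborel) (1 / p)"

definition lp_qnorm :: "real \<Rightarrow> (int \<Rightarrow> real) \<Rightarrow> ennreal" where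
  "lp_qnorm p c = epow (\<Sum>\<^sub>\<infinity> z. ennreal (\<bar>c z\<bar> powr p)) (1 / p)"

text \<open>Order of differences used: the integer m = floor s + 1 > s.\<close>
definition besov_m :: "real \<Rightarrow> nat" where
  "besov_m s = nat \<lfloor>s\<rfloor> + 1"

definition besov_qnorm :: "real \<Rightarrow> ennreal \<Rightarrow> real \<Rightarrow> (real \<Rightarrow> real) \<Rightarrow> ennreal" where
  "besov_qnorm p q s f =
     Lp_qnorm p f +
     (if q = \<infinity> then
        (SUP h \<in> {h. 0 < \<bar>h\<bar> \<and> \<bar>h\<bar> \<le> 1}.
            ennreal (\<bar>h\<bar> powr (- s)) * Lp_qnorm p (fdiff (besov_m s) h f))
      else
        epow (\<integral>\<^sup>+ h. indicator {h. \<bar>h\<bar> \<le> 1} h *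
                 ennreal (\<bar>h\<bar> powr (- s * enn2real q) / \<bar>h\<bar>) *
                 epow (Lp_qnorm p (fdiff (besov_m s) h f)) (enn2real q) \<partial>lborel)
             (1 / enn2real q))"

definition besov_space :: "real \<Rightarrow> ennreal \<Rightarrow> real \<Rightarrow> (real \<Rightarrow> real) set" where
  "besov_space p q s = {f. f \<in> borel_measurable lborel \<and> besov_qnorm p q s f < \<infinity>}"

definition L1_loc :: "(real \<Rightarrow> real) set" where
  "L1_loc = {f. \<forall>a b. set_integrable lborel {a..b} f}"

definition mult_qnorm :: "(real \<Rightarrow> real) set \<Rightarrow> ((real \<Rightarrow> real) \<Rightarrow> ennreal) \<Rightarrow> (real \<Rightarrow> real) \<Rightarrow> ennreal" where
  "mult_qnorm X N g = (SUP f \<in> {f \<in> X. N f \<le> 1}. N (\<lambda>x. g x * f x))"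

definition mult_space :: "(real \<Rightarrow> real) set \<Rightarrow> ((real \<Rightarrow> real) \<Rightarrow> ennreal) \<Rightarrow> (real \<Rightarrow> real) set" where
  "mult_space X N = {g. g \<in> borel_measurable lborel \<and> mult_qnorm X N g < \<infinity>}"

definition admissible_psi :: "(real \<Rightarrow> real) \<Rightarrow> bool" where
  "admissible_psi \<psi> \<longleftrightarrow>
     (\<forall>k x. ((deriv ^^ k) \<psi>) differentiable (at x)) \<and>
     (\<forall>x. \<psi> x \<ge> 0) \<and>
     closure {x. \<psi> x \<noteq> 0} = {-1..1} \<and>
     (\<forall>x. ((\<lambda>z::int. \<psi> (x - real_of_int z)) has_sum 1) UNIV)"

definition unif_qnorm :: "(real \<Rightarrow> real) \<Rightarrow> real \<Rightarrow> ennreal \<Rightarrow> real \<Rightarrow> (real \<Rightarrow> real) \<Rightarrow> ennreal" where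
  "unif_qnorm \<psi> p q s f = (SUP z::int. besov_qnorm p q s (\<lambda>x. f x * \<psi> (x - real_of_int z)))"

definition unif_space :: "(real \<Rightarrow> real) \<Rightarrow> real \<Rightarrow> ennreal \<Rightarrow> real \<Rightarrow> (real \<Rightarrow> real) set" where
  "unif_space \<psi> p q s = {f \<in> L1_loc. unif_qnorm \<psi> p q s f < \<infinity>}"

definition Ms_qnorm :: "(real \<Rightarrow> real) \<Rightarrow> real \<Rightarrow> ennreal \<Rightarrow> real \<Rightarrow> (real \<Rightarrow> real) \<Rightarrow> ennreal" where
  "Ms_qnorm \<psi> p q s f = (SUP c \<in> {c :: int \<Rightarrow> real. lp_qnorm p c \<le> 1}.
      besov_qnorm p q s (\<lambda>x. f x * (\<Sum>\<^sub>\<infinity> z. c z * \<psi> (x - real_of_int z))))"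

definition Ms_space :: "(real \<Rightarrow> real) \<Rightarrow> real \<Rightarrow> ennreal \<Rightarrow> real \<Rightarrow> (real \<Rightarrow> real) set" where
  "Ms_space \<psi> p q s = {f \<in> L1_loc. Ms_qnorm \<psi> p q s f < \<infinity>}"

definition cont_embed :: "'a set \<Rightarrow> ('a \<Rightarrow> ennreal) \<Rightarrow> 'a set \<Rightarrow> ('a \<Rightarrow> ennreal) \<Rightarrow> bool" where
  "cont_embed X NX Y NY \<longleftrightarrow> X \<subseteq> Y \<and> (\<exists>C::real. C \<ge> 0 \<and> (\<forall>f \<in> X. NY f \<le> ennreal C * NX f))"

end

(*
  For c in l^p(Z) put F_c = sum_z c_z psi(. - z). As psi vanishes outside [-1,1], at every point
  only the 2n + 3 translates with |x - z| <= n + 1 enter the n-th difference of F_c with step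
  |h| <= 1, and by the mean value theorem each of them contributes at most
  |c_z| |h|^n sup |psi^(n)|.
  Integrating gives ||Delta_h^n F_c||_p <= A_n |h|^n ||c||_p, and since the order m of the
  differences exceeds s, the Besov quasi-norms of all F_c with ||c||_p <= 1 are bounded by one
  constant K. For a multiplier g this yields ||g F_c|| <= K ||g||_M, i.e. the first embedding,
  once g is known to be locally integrable: iterating the multiplier estimate gives
  ||g^k psi(. - z)||_p <= ||g||_M^k K for all k, which forces |g| <= ||g||_M + 1 almost everywhere
  where psi(. - z) does not vanish, and these sets cover the line. The second embedding is the
  special case c = delta_z.
*)

theory Submission
  imports Defs
begin

lemma epow_ennreal: "x \<ge> 0 \<Longrightarrow> epow (ennreal x) r = ennreal (x powr r)"
  by (simp add: epow_def)

lemma epow_top [simp]: "epow top r = top"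
  by (simp add: epow_def)

lemma epow_0 [simp]: "r > 0 \<Longrightarrow> epow 0 r = 0"
  by (simp add: epow_def)

lemma epow_1 [simp]: "epow 1 r = 1"
  by (simp add: epow_def)

lemma epow_mono:
  assumes "r > 0" "a \<le> b"
  shows "epow a r \<le> epow b r"
proof (cases b)
  case (real y)
  moreover obtain x where "a = ennreal x" "x \<ge> 0"
    using assms(2) real by (cases a) (auto simp: top_unique)
  ultimately show ?thesis
    using assms by (auto simp: epow_def intro!: ennreal_leI powr_mono2)
qed (simp add: epow_def)

lemma epow_eq_0_iff: "r > 0 \<Longrightarrow> epow a r = 0 \<longleftrightarrow> a = 0"
  by (cases a) (auto simp: epow_def)

lemma epow_mult:
  assumes "r > 0"
  shows "epow (a * b) r = epow a r * epow b r"
proof (cases "a = \<infinity> \<or> b = \<infinity>")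
  case True
  then show ?thesis
  proof
    assume "a = \<infinity>"
    then show ?thesis
      using assms by (cases "b = 0") (simp_all add: epow_eq_0_iff ennreal_top_mult)
  next
    assume "b = \<infinity>"
    then show ?thesis
      using assms by (cases "a = 0") (simp_all add: epow_eq_0_iff ennreal_mult_top)
  qed
next
  case False
  then obtain x y where "a = ennreal x" "x \<ge> 0" "b = ennreal y" "y \<ge> 0"
    by (cases a; cases b) auto
  then show ?thesis
    using assms by (simp add: epow_def powr_mult ennreal_mult[symmetric])
qed

lemma epow_epow: "r > 0 \<Longrightarrow> epow (epow a r) t = epow a (r * t)"
  by (cases a) (auto simp: epow_def powr_powr)

lemma epow_one_right [simp]: "epow a 1 = a"
  by (cases a) (auto simp: epow_def)

(* Unlike nn_integral_cmult, no measurability is required: the Besov integrands in h are never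
   shown to be measurable. *)
lemma nn_integral_cmult_not_top:
  assumes "c \<noteq> \<infinity>"
  shows "(\<integral>\<^sup>+x. c * f x \<partial>M) = c * integral\<^sup>N M f"
proof -
  have le: "d * integral\<^sup>N M g \<le> (\<integral>\<^sup>+x. d * g x \<partial>M)" for d g
  proof -
    have "d * integral\<^sup>N M g = (SUP u \<in> {u. simple_function M u \<and> u \<le> g}. d * integral\<^sup>S M u)"
      unfolding nn_integral_def by (simp add: SUP_mult_left_ennreal)
    also have "\<dots> \<le> (\<integral>\<^sup>+x. d * g x \<partial>M)"
    proof (rule SUP_least)
      fix u assume u: "u \<in> {u. simple_function M u \<and> u \<le> g}"
      then have "d * integral\<^sup>S M u = integral\<^sup>N M (\<lambda>x. d * u x)"
        by (simp add: nn_integral_eq_simple_integral)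
      also have "\<dots> \<le> (\<integral>\<^sup>+x. d * g x \<partial>M)"
        using u by (auto intro!: nn_integral_mono mult_left_mono simp: le_fun_def)
      finally show "d * integral\<^sup>S M u \<le> (\<integral>\<^sup>+x. d * g x \<partial>M)" .
    qed
    finally show ?thesis .
  qed
  show ?thesis
  proof (cases "c = 0")
    case False
    then obtain r where r: "c = ennreal r" "r > 0"
      using assms by (cases c) auto
    have cancel: "ennreal (1 / r) * c = 1"
      using r by (simp add: ennreal_mult''[symmetric])
    have "(\<integral>\<^sup>+x. c * f x \<partial>M) = c * (ennreal (1 / r) * (\<integral>\<^sup>+x. c * f x \<partial>M))"
      by (simp add: mult.assoc[symmetric] cancel mult.commute[of c])
    also have "\<dots> \<le> c * (\<integral>\<^sup>+x. ennreal (1 / r) * (c * f x) \<partial>M)"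
      by (intro mult_left_mono le) simp
    also have "\<dots> = c * integral\<^sup>N M f"
      by (simp add: mult.assoc[symmetric] cancel)
    finally show ?thesis
      using le[of c f] by (rule antisym)
  qed simp
qed

lemma power_powr: "(a::real) \<ge> 0 \<Longrightarrow> (a ^ k) powr p = (a powr p) ^ k"
  by (induction k) (simp_all add: powr_mult)

lemma powr_sum_le:
  fixes a :: "'a \<Rightarrow> real"
  assumes "finite W" "real (card W) \<le> N" and a: "\<And>z. a z \<ge> 0" and "p > 0"
  shows "(\<Sum>z\<in>W. a z) powr p \<le> N powr p * (\<Sum>z\<in>W. a z powr p)"
proof (cases "W = {}")
  case False
  define M where "M = Max (a ` W)"
  have "M \<in> a ` W"
    unfolding M_def using assms(1) False by (intro Max_in) auto
  then obtain z0 where z0: "z0 \<in> W" "M = a z0"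
    by blast
  have "(\<Sum>z\<in>W. a z) \<le> real (card W) * M"
    using sum_bounded_above[of W a M] assms(1) by (simp add: M_def)
  also have "\<dots> \<le> N * M"
    using assms(2) z0 a by (intro mult_right_mono) auto
  finally have "(\<Sum>z\<in>W. a z) powr p \<le> (N * M) powr p"
    using assms(4) a by (intro powr_mono2) (auto intro: sum_nonneg)
  also have "\<dots> = N powr p * M powr p"
    using assms(2) z0 a by (simp add: powr_mult)
  also have "\<dots> \<le> N powr p * (\<Sum>z\<in>W. a z powr p)"
    using z0 assms(1) by (auto intro!: mult_left_mono member_le_sum)
  finally show ?thesis .
qed simp

lemma le_0_of_le_geometric:
  fixes a x C :: real
  assumes "0 \<le> x" "x < 1" "\<And>k. a \<le> x ^ k * C"
  shows "a \<le> 0"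
proof -
  have "(\<lambda>k. x ^ k * C) \<longlonglongrightarrow> 0 * C"
    using assms(1,2) by (intro tendsto_mult_right LIMSEQ_power_zero) simp
  then show ?thesis
    using assms(3) by (intro LIMSEQ_le_const) auto
qed

lemma ennreal_eq_0_of_mult_le:
  fixes a M :: ennreal
  assumes le: "\<And>t. t > 0 \<Longrightarrow> ennreal t * a \<le> M" and "M < \<infinity>"
  shows "a = 0"
proof (rule ccontr)
  assume "a \<noteq> 0"
  obtain m where m: "M = ennreal m" "m \<ge> 0"
    using \<open>M < \<infinity>\<close> by (cases M) auto
  show False
  proof (cases a)
    case (real w)
    with \<open>a \<noteq> 0\<close> have "w > 0"
      by auto
    then have "ennreal ((m + 1) / w) * a = ennreal (m + 1)"
      using real by (simp add: ennreal_mult''[symmetric])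
    then have "ennreal (m + 1) \<le> ennreal m"
      using le[of "(m + 1) / w"] m \<open>w > 0\<close> by simp
    then show False
      using m by simp
  next
    case top
    then show False
      using le[of 1] \<open>M < \<infinity>\<close> by simp
  qed
qed

lemma infsum_ennreal_int_SUP:
  fixes f :: "int \<Rightarrow> ennreal"
  shows "(\<Sum>\<^sub>\<infinity>z. f z) = (SUP N::nat. \<Sum>z\<in>{- int N..int N}. f z)"
proof -
  have "(\<Sum>\<^sub>\<infinity>z. f z) = (SUP F\<in>{F. finite F \<and> F \<subseteq> UNIV}. sum f F)"
    by (rule nonneg_infsum_complete) simp
  also have "\<dots> = (SUP N::nat. \<Sum>z\<in>{- int N..int N}. f z)"
  proof (rule antisym)
    show "(SUP F\<in>{F. finite F \<and> F \<subseteq> UNIV}. sum f F) \<le> (SUP N::nat. \<Sum>z\<in>{- int N..int N}. f z)"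
    proof (rule SUP_least)
      fix F :: "int set"
      assume "F \<in> {F. finite F \<and> F \<subseteq> UNIV}"
      then obtain k where "abs ` F \<subseteq> {..k}"
        by (auto simp: finite_int_iff_bounded_le)
      then have "F \<subseteq> {- int (nat k)..int (nat k)}"
        by (force simp: abs_le_iff)
      then have "sum f F \<le> (\<Sum>z\<in>{- int (nat k)..int (nat k)}. f z)"
        by (intro sum_mono2) auto
      then show "sum f F \<le> (SUP N::nat. \<Sum>z\<in>{- int N..int N}. f z)"
        by (rule SUP_upper2[rotated]) simp
    qed
  qed (intro SUP_least SUP_upper; simp)
  finally show ?thesis .
qed

lemma infsum_ennreal_int_mult_right:
  fixes f :: "int \<Rightarrow> ennreal"
  shows "(\<Sum>\<^sub>\<infinity>z. f z * c) = (\<Sum>\<^sub>\<infinity>z. f z) * c"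
  by (simp add: infsum_ennreal_int_SUP sum_distrib_right SUP_mult_right_ennreal)

lemma nn_integral_infsum_int:
  fixes g :: "int \<Rightarrow> 'a \<Rightarrow> ennreal"
  assumes [measurable]: "\<And>z. g z \<in> borel_measurable M"
  shows "(\<integral>\<^sup>+x. (\<Sum>\<^sub>\<infinity>z. g z x) \<partial>M) = (\<Sum>\<^sub>\<infinity>z. \<integral>\<^sup>+x. g z x \<partial>M)"
proof -
  have "incseq (\<lambda>N::nat. \<lambda>x. \<Sum>z\<in>{- int N..int N}. g z x)"
    by (auto simp: incseq_def le_fun_def intro!: sum_mono2)
  then show ?thesis
    by (simp add: infsum_ennreal_int_SUP nn_integral_monotone_convergence_SUP nn_integral_sum)
qed

lemma nn_integral_indicator_abs_powr:
  assumes "b > 0"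
  shows "(\<integral>\<^sup>+h. indicator {h. \<bar>h\<bar> \<le> 1} h * ennreal (\<bar>h\<bar> powr (b - 1)) \<partial>lborel) = ennreal (2 / b)"
proof -
  let ?g = "\<lambda>x::real. \<bar>x\<bar> powr (b - 1)"
  have "((\<lambda>x. x powr (b - 1)) has_integral (1 / b)) {0..1}"
    using has_integral_powr_from_0[of "b - 1" 1] assms by simp
  then have right: "(?g has_integral (1 / b)) {0..1}"
    by (rule has_integral_eq[rotated]) simp
  then have left: "(?g has_integral (1 / b)) {-1..0}"
    using has_integral_reflect_real[where f = ?g and a = 0 and b = 1] by simp
  have "(?g has_integral (2 / b)) {-1..1}"
    using has_integral_combine[OF _ _ left right] by simp
  then have "((\<lambda>x. if x \<in> {-1..1} then ?g x else 0) has_integral (2 / b)) UNIV"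
    by (simp only: has_integral_restrict_UNIV)
  then have "integral\<^sup>N lborel (\<lambda>x. if x \<in> {-1..1} then ?g x else 0) = ennreal (2 / b)"
    by (rule nn_integral_has_integral_lborel[rotated 2]) auto
  moreover have "(\<integral>\<^sup>+h. indicator {h. \<bar>h\<bar> \<le> 1} h * ennreal (?g h) \<partial>lborel)
      = integral\<^sup>N lborel (\<lambda>x. if x \<in> {-1..1} then ?g x else 0)"
    by (rule nn_integral_cong) (auto simp: indicator_def abs_le_iff)
  ultimately show ?thesis
    by simp
qed

section \<open>Finite differences\<close>

lemma fdiff_0 [simp]: "fdiff 0 h f = f"
  by (simp add: fdiff_def fun_eq_iff)

lemma fdiff_Suc: "fdiff (Suc n) h f x = fdiff n h f (x + h) - fdiff n h f x"
proof -
  define a where "a j = f (x + real j * h)" for j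
  have fd: "fdiff k h f x = (\<Sum>j\<le>k. (-1) ^ (k - j) * real (k choose j) * a j)" for k
    unfolding fdiff_def a_def by (simp add: atLeast0AtMost)
  have shifted: "fdiff n h f (x + h) = (\<Sum>j\<le>n. (-1) ^ (n - j) * real (n choose j) * a (Suc j))"
    unfolding fdiff_def a_def by (simp add: atLeast0AtMost algebra_simps)
  have split: "fdiff (Suc n) h f x = (-1) ^ Suc n * a 0 +
      (\<Sum>j\<le>n. (-1) ^ (n - j) * real (Suc n choose Suc j) * a (Suc j))"
    unfolding fd by (subst sum.atMost_Suc_shift) simp
  have pascal: "(\<Sum>j\<le>n. (-1) ^ (n - j) * real (Suc n choose Suc j) * a (Suc j)) =
      (\<Sum>j\<le>n. (-1) ^ (n - j) * real (n choose j) * a (Suc j)) +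
      (\<Sum>j\<le>n. (-1) ^ (n - j) * real (n choose Suc j) * a (Suc j))"
    by (simp add: sum.distrib algebra_simps)
  have "(-1) ^ Suc n * a 0 + (\<Sum>j\<le>n. (-1) ^ (n - j) * real (n choose Suc j) * a (Suc j))
      = (\<Sum>j\<le>Suc n. (-1) ^ (Suc n - j) * real (n choose j) * a j)"
    by (subst sum.atMost_Suc_shift) simp
  also have "\<dots> = - fdiff n h f x"
    unfolding fd by (simp add: sum_negf[symmetric] Suc_diff_le)
  finally have unshifted: "(-1) ^ Suc n * a 0 +
      (\<Sum>j\<le>n. (-1) ^ (n - j) * real (n choose Suc j) * a (Suc j)) = - fdiff n h f x" .
  show ?thesis
    using split pascal unshifted shifted by simp
qed

lemma fdiff_cmult: "fdiff m h (\<lambda>x. t * f x) = (\<lambda>x. t * fdiff m h f x)"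
  unfolding fdiff_def by (auto simp: sum_distrib_left algebra_simps)

lemma fdiff_has_derivative:
  assumes "\<And>y. (f has_real_derivative f' y) (at y)"
  shows "(fdiff n h f has_real_derivative fdiff n h f' x) (at x)"
proof -
  have "((\<lambda>y. f (y + real j * h)) has_real_derivative f' (x + real j * h)) (at x)" for j
    using assms[of "x + real j * h"] by (simp add: DERIV_shift)
  then show ?thesis
    unfolding fdiff_def[abs_def] by (intro DERIV_sum DERIV_cmult)
qed

lemma abs_fdiff_le:
  fixes f :: "real \<Rightarrow> real"
  assumes smooth: "\<And>k x. ((deriv ^^ k) f has_real_derivative (deriv ^^ Suc k) f x) (at x)"
    and bound: "\<And>x. \<bar>(deriv ^^ (n + k)) f x\<bar> \<le> B"
  shows "\<bar>fdiff n h ((deriv ^^ k) f) x\<bar> \<le> \<bar>h\<bar> ^ n * B"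
  using bound
proof (induction n arbitrary: k x)
  case (Suc n)
  have "\<bar>fdiff n h ((deriv ^^ Suc k) f) y\<bar> \<le> \<bar>h\<bar> ^ n * B" for y
    using Suc.prems by (intro Suc.IH) simp
  moreover have
    "(fdiff n h ((deriv ^^ k) f) has_real_derivative fdiff n h ((deriv ^^ Suc k) f) y) (at y)" for y
    by (intro fdiff_has_derivative smooth)
  ultimately have "norm (fdiff n h ((deriv ^^ k) f) (x + h) - fdiff n h ((deriv ^^ k) f) x)
      \<le> \<bar>h\<bar> ^ n * B * norm (x + h - x)"
    by (intro field_differentiable_bound[where S = UNIV]) auto
  then show ?case
    by (simp add: fdiff_Suc mult_ac)
qed simp

section \<open>The admissible function \<open>\<psi>\<close>\<close>

context
  fixes \<psi> :: "real \<Rightarrow> real"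
  assumes adm: "admissible_psi \<psi>"
begin

lemma admissible_psi_has_derivative:
  "((deriv ^^ k) \<psi> has_real_derivative (deriv ^^ Suc k) \<psi> x) (at x)"
proof -
  have "(deriv ^^ k) \<psi> differentiable (at x)"
    using adm unfolding admissible_psi_def by blast
  then show ?thesis
    by (simp add: DERIV_deriv_iff_real_differentiable)
qed

lemma admissible_psi_deriv_eq_0:
  assumes "1 < \<bar>x\<bar>"
  shows "(deriv ^^ k) \<psi> x = 0"
  using assms
proof (induction k arbitrary: x)
  case 0
  have "closure {x. \<psi> x \<noteq> 0} = {-1..1}"
    using adm unfolding admissible_psi_def by blast
  then show ?case
    using 0 closure_subset[of "{x. \<psi> x \<noteq> 0}"] by (force simp: abs_le_iff)
next
  case (Suc k)
  have "open {y::real. 1 < \<bar>y\<bar>}"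
    by (rule open_Collect_less) (auto intro!: continuous_intros)
  moreover have "((\<lambda>_. 0) has_real_derivative 0) (at x)"
    by simp
  ultimately have "((deriv ^^ k) \<psi> has_real_derivative 0) (at x)"
    using Suc by (elim has_field_derivative_transform_within_open) auto
  with admissible_psi_has_derivative show ?case
    by (rule DERIV_unique)
qed

lemma admissible_psi_eq_0: "1 < \<bar>x\<bar> \<Longrightarrow> \<psi> x = 0"
  using admissible_psi_deriv_eq_0[of x 0] by simp

lemma admissible_psi_deriv_continuous: "continuous_on S ((deriv ^^ k) \<psi>)"
proof -
  have "\<forall>x\<in>S. isCont ((deriv ^^ k) \<psi>) x"
    using admissible_psi_has_derivative DERIV_isCont by blast
  then show ?thesis
    by (rule continuous_at_imp_continuous_on)
qed

lemma admissible_psi_deriv_bounded: "\<exists>B\<ge>0. \<forall>x. \<bar>(deriv ^^ k) \<psi> x\<bar> \<le> B"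
proof -
  have "bounded ((deriv ^^ k) \<psi> ` {-1..1})"
    by (intro compact_imp_bounded compact_continuous_image admissible_psi_deriv_continuous) simp
  then obtain B where B: "\<forall>x\<in>{-1..1}. \<bar>(deriv ^^ k) \<psi> x\<bar> \<le> B"
    by (auto simp: bounded_iff)
  have "\<bar>(deriv ^^ k) \<psi> x\<bar> \<le> max B 0" for x
  proof (cases "\<bar>x\<bar> \<le> 1")
    case True
    then have "x \<in> {-1..1}"
      by (simp add: abs_le_iff)
    then show ?thesis
      using B by (blast intro: max.coboundedI1)
  qed (simp add: admissible_psi_deriv_eq_0)
  then show ?thesis
    by (intro exI[of _ "max B 0"]) simp
qed

lemma admissible_psi_measurable: "\<psi> \<in> borel_measurable borel"
  using admissible_psi_deriv_continuous[of UNIV 0] by (simp add: borel_measurable_continuous_onI)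

lemma admissible_psi_translate_nonzero: "\<exists>z::int. \<psi> (x - real_of_int z) \<noteq> 0"
proof (rule ccontr)
  assume "\<not> ?thesis"
  then have "((\<lambda>z::int. \<psi> (x - real_of_int z)) has_sum 0) UNIV"
    by (intro has_sum_0) auto
  moreover have "((\<lambda>z::int. \<psi> (x - real_of_int z)) has_sum 1) UNIV"
    using adm by (simp add: admissible_psi_def)
  ultimately have "(0::real) = 1"
    by (rule has_sum_unique)
  then show False
    by simp
qed

end

section \<open>Superpositions of integer translates\<close>

definition psi_series :: "(real \<Rightarrow> real) \<Rightarrow> (int \<Rightarrow> real) \<Rightarrow> real \<Rightarrow> real" where
  "psi_series \<psi> c x = (\<Sum>\<^sub>\<infinity>z. c z * \<psi> (x - real_of_int z))"

definition near_ints :: "real \<Rightarrow> real \<Rightarrow> int set" where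
  "near_ints x R = {z. \<bar>x - real_of_int z\<bar> \<le> R}"

lemma near_ints_subset: "near_ints x R \<subseteq> {\<lceil>x - R\<rceil>..\<lfloor>x + R\<rfloor>}"
  by (auto simp: near_ints_def abs_le_iff ceiling_le_iff le_floor_iff)

lemma finite_near_ints [simp]: "finite (near_ints x R)"
  using near_ints_subset by (rule finite_subset) simp

lemma card_near_ints_le:
  assumes "R \<ge> 0"
  shows "real (card (near_ints x R)) \<le> 2 * R + 1"
proof -
  have "card (near_ints x R) \<le> card {\<lceil>x - R\<rceil>..\<lfloor>x + R\<rfloor>}"
    using near_ints_subset by (rule card_mono[rotated]) simp
  also have "\<dots> = nat (\<lfloor>x + R\<rfloor> - \<lceil>x - R\<rceil> + 1)"
    by simp
  finally have "real (card (near_ints x R)) \<le> max 0 (real_of_int (\<lfloor>x + R\<rfloor> - \<lceil>x - R\<rceil> + 1))"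
    by linarith
  moreover have "real_of_int (\<lfloor>x + R\<rfloor> - \<lceil>x - R\<rceil> + 1) \<le> 2 * R + 1"
    using of_int_floor_le[of "x + R"] le_of_int_ceiling[of "x - R"] by linarith
  ultimately show ?thesis
    using assms by linarith
qed

lemma nn_integral_sum_near_ints:
  assumes a: "\<And>z. a z \<ge> 0" and "R \<ge> 0"
  shows "(\<integral>\<^sup>+x. ennreal (\<Sum>z\<in>near_ints x R. a z) \<partial>lborel) = (\<Sum>\<^sub>\<infinity>z. ennreal (a z)) * ennreal (2 * R)"
proof -
  let ?I = "\<lambda>z::int. {real_of_int z - R..real_of_int z + R}"
  have "ennreal (\<Sum>z\<in>near_ints x R. a z) = (\<Sum>\<^sub>\<infinity>z. ennreal (a z) * indicator (?I z) x)" for x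
  proof -
    have "(\<Sum>\<^sub>\<infinity>z. ennreal (a z) * indicator (?I z) x)
        = (\<Sum>\<^sub>\<infinity>z\<in>near_ints x R. ennreal (a z) * indicator (?I z) x)"
      by (rule infsum_cong_neutral) (auto simp: near_ints_def indicator_def abs_le_iff)
    also have "\<dots> = (\<Sum>z\<in>near_ints x R. ennreal (a z))"
      by (simp, intro sum.cong) (auto simp: near_ints_def indicator_def abs_le_iff)
    finally show ?thesis
      using a by (simp add: sum_ennreal)
  qed
  then have "(\<integral>\<^sup>+x. ennreal (\<Sum>z\<in>near_ints x R. a z) \<partial>lborel)
      = (\<Sum>\<^sub>\<infinity>z. \<integral>\<^sup>+x. ennreal (a z) * indicator (?I z) x \<partial>lborel)"
    by (simp add: nn_integral_infsum_int)
  also have "\<dots> = (\<Sum>\<^sub>\<infinity>z. ennreal (a z) * ennreal (2 * R))"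
    using assms(2) by (simp add: nn_integral_cmult_indicator)
  finally show ?thesis
    by (simp add: infsum_ennreal_int_mult_right)
qed

lemma lp_qnorm_le_1_iff:
  assumes "p > 0"
  shows "lp_qnorm p c \<le> 1 \<longleftrightarrow> (\<Sum>\<^sub>\<infinity>z. ennreal (\<bar>c z\<bar> powr p)) \<le> 1"
proof
  assume "lp_qnorm p c \<le> 1"
  then have "epow (lp_qnorm p c) p \<le> 1"
    using epow_mono[OF assms] by fastforce
  then show "(\<Sum>\<^sub>\<infinity>z. ennreal (\<bar>c z\<bar> powr p)) \<le> 1"
    using assms by (simp add: lp_qnorm_def epow_epow)
next
  assume "(\<Sum>\<^sub>\<infinity>z. ennreal (\<bar>c z\<bar> powr p)) \<le> 1"
  then show "lp_qnorm p c \<le> 1"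
    unfolding lp_qnorm_def using epow_mono[of "1 / p" _ 1] assms by fastforce
qed

context
  fixes \<psi> :: "real \<Rightarrow> real"
  assumes support: "\<And>y. 1 < \<bar>y\<bar> \<Longrightarrow> \<psi> y = 0"
begin

lemma psi_series_eq_sum:
  assumes "finite W" "near_ints x 1 \<subseteq> W"
  shows "psi_series \<psi> c x = (\<Sum>z\<in>W. c z * \<psi> (x - real_of_int z))"
proof -
  have "psi_series \<psi> c x = (\<Sum>\<^sub>\<infinity>z\<in>W. c z * \<psi> (x - real_of_int z))"
    unfolding psi_series_def
  proof (rule infsum_cong_neutral)
    fix z
    assume "z \<in> UNIV - W"
    then have "z \<notin> near_ints x 1"
      using assms(2) by blast
    then have "1 < \<bar>x - real_of_int z\<bar>"
      by (simp add: near_ints_def)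
    then show "c z * \<psi> (x - real_of_int z) = 0"
      using support by simp
  qed auto
  then show ?thesis
    using assms(1) by simp
qed

lemma fdiff_psi_series:
  assumes "\<bar>h\<bar> \<le> 1"
  shows "fdiff n h (psi_series \<psi> c) x =
    (\<Sum>z\<in>near_ints x (n + 1). c z * fdiff n h \<psi> (x - real_of_int z))"
proof -
  let ?W = "near_ints x (n + 1)"
  have window: "near_ints (x + real j * h) 1 \<subseteq> ?W" if "j \<le> n" for j
  proof
    fix z assume z: "z \<in> near_ints (x + real j * h) 1"
    have "real j * \<bar>h\<bar> \<le> real n * 1"
      by (rule mult_mono) (use that assms in auto)
    then have "\<bar>real j * h\<bar> \<le> real n"
      by (simp add: abs_mult)
    then show "z \<in> ?W"
      using z by (simp add: near_ints_def)
  qed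
  have "fdiff n h (psi_series \<psi> c) x = (\<Sum>j=0..n. (-1) ^ (n - j) * real (n choose j) *
      (\<Sum>z\<in>?W. c z * \<psi> (x + real j * h - real_of_int z)))"
    unfolding fdiff_def
    by (intro sum.cong refl arg_cong2[where f = times] psi_series_eq_sum[OF finite_near_ints]
        window) simp_all
  also have "\<dots> = (\<Sum>z\<in>?W. \<Sum>j=0..n. c z * ((-1) ^ (n - j) * real (n choose j) *
      \<psi> (x - real_of_int z + real j * h)))"
    by (subst sum.swap) (simp add: sum_distrib_left algebra_simps)
  also have "\<dots> = (\<Sum>z\<in>?W. c z * fdiff n h \<psi> (x - real_of_int z))"
    unfolding fdiff_def by (simp add: sum_distrib_left)
  finally show ?thesis .
qed

lemma abs_fdiff_psi_series_le:
  assumes "\<bar>h\<bar> \<le> 1"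
    and D: "\<And>y. \<bar>fdiff n h \<psi> y\<bar> \<le> D"
  shows "\<bar>fdiff n h (psi_series \<psi> c) x\<bar> \<le> D * (\<Sum>z\<in>near_ints x (n + 1). \<bar>c z\<bar>)"
proof -
  have "\<bar>fdiff n h (psi_series \<psi> c) x\<bar>
      \<le> (\<Sum>z\<in>near_ints x (n + 1). \<bar>c z * fdiff n h \<psi> (x - real_of_int z)\<bar>)"
    unfolding fdiff_psi_series[OF assms(1)] by (rule sum_abs)
  also have "\<dots> \<le> (\<Sum>z\<in>near_ints x (n + 1). \<bar>c z\<bar> * D)"
    by (intro sum_mono) (simp add: abs_mult D mult_left_mono)
  finally show ?thesis
    by (simp add: sum_distrib_left mult.commute)
qed

lemma abs_fdiff_psi_series_powr_le:
  assumes "p > 0" "\<bar>h\<bar> \<le> 1" and D: "\<And>y. \<bar>fdiff n h \<psi> y\<bar> \<le> D"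
  shows "\<bar>fdiff n h (psi_series \<psi> c) x\<bar> powr p
    \<le> (D * (2 * real n + 3)) powr p * (\<Sum>z\<in>near_ints x (n + 1). \<bar>c z\<bar> powr p)"
proof -
  have "D \<ge> 0"
    using D[of 0] by linarith
  have "\<bar>fdiff n h (psi_series \<psi> c) x\<bar> powr p \<le> (D * (\<Sum>z\<in>near_ints x (n + 1). \<bar>c z\<bar>)) powr p"
    using abs_fdiff_psi_series_le[OF assms(2) D] assms(1) by (intro powr_mono2) auto
  also have "\<dots> = D powr p * (\<Sum>z\<in>near_ints x (n + 1). \<bar>c z\<bar>) powr p"
    using \<open>D \<ge> 0\<close> by (simp add: powr_mult sum_nonneg)
  also have "\<dots> \<le> D powr p * ((2 * real n + 3) powr p * (\<Sum>z\<in>near_ints x (n + 1). \<bar>c z\<bar> powr p))"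
    using card_near_ints_le[of "n + 1" x] assms(1)
    by (intro mult_left_mono powr_sum_le) auto
  also have "\<dots> = (D * (2 * real n + 3)) powr p * (\<Sum>z\<in>near_ints x (n + 1). \<bar>c z\<bar> powr p)"
    using \<open>D \<ge> 0\<close> by (simp add: powr_mult)
  finally show ?thesis .
qed

lemma Lp_qnorm_fdiff_psi_series_le:
  assumes "p > 0" "\<bar>h\<bar> \<le> 1" "lp_qnorm p c \<le> 1" and D: "\<And>y. \<bar>fdiff n h \<psi> y\<bar> \<le> D"
  shows "Lp_qnorm p (fdiff n h (psi_series \<psi> c))
    \<le> ennreal (D * (2 * real n + 3) * (2 * real n + 2) powr (1 / p))"
proof -
  have "D \<ge> 0"
    using D[of 0] by linarith
  define K where "K = (D * (2 * real n + 3)) powr p"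
  have "(\<integral>\<^sup>+x. ennreal (\<bar>fdiff n h (psi_series \<psi> c) x\<bar> powr p) \<partial>lborel)
      \<le> (\<integral>\<^sup>+x. ennreal K * ennreal (\<Sum>z\<in>near_ints x (n + 1). \<bar>c z\<bar> powr p) \<partial>lborel)"
    using abs_fdiff_psi_series_powr_le[OF assms(1,2) D]
    by (intro nn_integral_mono) (simp add: K_def ennreal_mult'[symmetric] ennreal_leI)
  also have "\<dots> = ennreal K * ((\<Sum>\<^sub>\<infinity>z. ennreal (\<bar>c z\<bar> powr p)) * ennreal (2 * real (n + 1)))"
    by (simp add: nn_integral_cmult_not_top nn_integral_sum_near_ints)
  also have "\<dots> \<le> ennreal K * (1 * ennreal (2 * real (n + 1)))"
    using lp_qnorm_le_1_iff[of p c] assms(1,3) by (intro mult_left_mono mult_right_mono) auto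
  also have "\<dots> = ennreal (K * (2 * real n + 2))"
    by (simp add: K_def ennreal_mult algebra_simps)
  finally have "Lp_qnorm p (fdiff n h (psi_series \<psi> c))
      \<le> epow (ennreal (K * (2 * real n + 2))) (1 / p)"
    unfolding Lp_qnorm_def using assms(1) by (intro epow_mono) auto
  also have "\<dots> = ennreal (D * (2 * real n + 3) * (2 * real n + 2) powr (1 / p))"
    using assms(1) \<open>D \<ge> 0\<close> by (simp add: K_def epow_ennreal powr_mult powr_powr)
  finally show ?thesis .
qed

lemma psi_series_measurable:
  assumes [measurable]: "\<psi> \<in> borel_measurable borel"
  shows "psi_series \<psi> c \<in> borel_measurable borel"
proof (rule borel_measurable_LIMSEQ_real)
  fix x
  have "\<forall>\<^sub>F N in sequentially. (\<Sum>z\<in>{- int N..int N}. c z * \<psi> (x - real_of_int z)) = psi_series \<psi> c x"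
  proof (rule eventually_sequentiallyI)
    fix N assume N: "nat \<lceil>\<bar>x\<bar>\<rceil> + 1 \<le> N"
    have "near_ints x 1 \<subseteq> {- int N..int N}"
    proof
      fix z assume "z \<in> near_ints x 1"
      then have "\<bar>x - real_of_int z\<bar> \<le> 1"
        by (simp add: near_ints_def)
      then have "\<bar>real_of_int z\<bar> \<le> real_of_int \<lceil>\<bar>x\<bar>\<rceil> + 1"
        using le_of_int_ceiling[of "\<bar>x\<bar>"] by linarith
      then show "z \<in> {- int N..int N}"
        using N by (simp add: abs_le_iff) linarith
    qed
    then show "(\<Sum>z\<in>{- int N..int N}. c z * \<psi> (x - real_of_int z)) = psi_series \<psi> c x"
      by (intro psi_series_eq_sum[symmetric]) (simp_all add: support)
  qed
  then show "(\<lambda>N. \<Sum>z\<in>{- int N..int N}. c z * \<psi> (x - real_of_int z)) \<longlonglongrightarrow> psi_series \<psi> c x"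
    by (rule tendsto_eventually)
qed measurable

end

lemma psi_series_delta: "psi_series \<psi> (\<lambda>w. if w = z then 1 else 0) = (\<lambda>x. \<psi> (x - real_of_int z))"
proof
  fix x
  have "psi_series \<psi> (\<lambda>w. if w = z then 1 else 0) x
      = (\<Sum>\<^sub>\<infinity>w\<in>{z}. (if w = z then 1 else 0) * \<psi> (x - real_of_int w))"
    unfolding psi_series_def by (rule infsum_cong_neutral) auto
  then show "psi_series \<psi> (\<lambda>w. if w = z then 1 else 0) x = \<psi> (x - real_of_int z)"
    by simp
qed

lemma lp_qnorm_delta:
  assumes "p > 0"
  shows "lp_qnorm p (\<lambda>w. if w = z then 1 else 0) = 1"
proof -
  have "(\<Sum>\<^sub>\<infinity>w. ennreal (\<bar>if w = z then 1 else 0\<bar> powr p)) =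
      (\<Sum>\<^sub>\<infinity>w\<in>{z}. ennreal (\<bar>if w = z then 1 else 0\<bar> powr p))"
    by (rule infsum_cong_neutral) auto
  then show ?thesis
    unfolding lp_qnorm_def by simp
qed

section \<open>Besov norms of superpositions\<close>

lemma besov_m_gt: "s < real (besov_m s)"
  unfolding besov_m_def by linarith

lemma besov_qnorm_top_le:
  assumes "Lp_qnorm p f \<le> ennreal A0" "A \<ge> 0"
    and diff: "\<And>h. \<bar>h\<bar> \<le> 1 \<Longrightarrow> Lp_qnorm p (fdiff (besov_m s) h f) \<le> ennreal (A * \<bar>h\<bar> ^ besov_m s)"
  shows "besov_qnorm p \<infinity> s f \<le> ennreal A0 + ennreal A"
proof -
  let ?m = "besov_m s"
  have "ennreal (\<bar>h\<bar> powr (- s)) * Lp_qnorm p (fdiff ?m h f) \<le> ennreal A"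
    if "0 < \<bar>h\<bar>" "\<bar>h\<bar> \<le> 1" for h
  proof -
    have "\<bar>h\<bar> powr (- s) * \<bar>h\<bar> ^ ?m = \<bar>h\<bar> powr (real ?m - s)"
      using that by (simp add: powr_realpow[symmetric] powr_add[symmetric])
    also have "\<dots> \<le> 1"
      using that besov_m_gt[of s] by (intro powr_le1) auto
    finally have decay: "A * (\<bar>h\<bar> powr (- s) * \<bar>h\<bar> ^ ?m) \<le> A"
      using assms(2) by (simp add: mult_left_le)
    have "ennreal (\<bar>h\<bar> powr (- s)) * Lp_qnorm p (fdiff ?m h f)
        \<le> ennreal (\<bar>h\<bar> powr (- s)) * ennreal (A * \<bar>h\<bar> ^ ?m)"
      using diff[OF that(2)] by (rule mult_left_mono) simp
    also have "\<dots> = ennreal (A * (\<bar>h\<bar> powr (- s) * \<bar>h\<bar> ^ ?m))"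
      by (simp add: ennreal_mult'[symmetric] mult_ac)
    also have "\<dots> \<le> ennreal A"
      using decay by (rule ennreal_leI)
    finally show ?thesis .
  qed
  then show ?thesis
    unfolding besov_qnorm_def using assms(1) by (auto intro!: add_mono SUP_least)
qed

lemma powr_weight_mult_eq:
  fixes h :: real
  assumes "h \<noteq> 0" "A \<ge> 0"
  shows "\<bar>h\<bar> powr (- s * Q) / \<bar>h\<bar> * (A * \<bar>h\<bar> ^ m) powr Q = A powr Q * \<bar>h\<bar> powr ((real m - s) * Q - 1)"
proof -
  have "(A * \<bar>h\<bar> ^ m) powr Q = A powr Q * \<bar>h\<bar> powr (real m * Q)"
    using assms by (simp add: powr_mult powr_realpow[symmetric] powr_powr)
  moreover have "\<bar>h\<bar> powr (- s * Q) / \<bar>h\<bar> = \<bar>h\<bar> powr (- s * Q - 1)"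
    using assms by (simp add: powr_diff)
  ultimately show ?thesis
    by (simp add: powr_add[symmetric] algebra_simps)
qed

lemma besov_qnorm_finite_le:
  assumes "0 < q" "q \<noteq> \<infinity>" "Lp_qnorm p f \<le> ennreal A0" "A \<ge> 0"
    and diff: "\<And>h. \<bar>h\<bar> \<le> 1 \<Longrightarrow> Lp_qnorm p (fdiff (besov_m s) h f) \<le> ennreal (A * \<bar>h\<bar> ^ besov_m s)"
  defines "Q \<equiv> enn2real q"
  shows "besov_qnorm p q s f
    \<le> ennreal A0 + ennreal (A * (2 / ((real (besov_m s) - s) * Q)) powr (1 / Q))"
proof -
  let ?m = "besov_m s"
  let ?F = "\<lambda>h. indicator {h. \<bar>h\<bar> \<le> 1} h * ennreal (\<bar>h\<bar> powr (- s * Q) / \<bar>h\<bar>) *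
    epow (Lp_qnorm p (fdiff ?m h f)) Q"
  define b where "b = (real ?m - s) * Q"
  have "Q > 0"
    using assms(1,2) by (simp add: Q_def enn2real_positive_iff less_top)
  then have "b > 0"
    using besov_m_gt[of s] by (simp add: b_def)
  have integrand: "?F h \<le> ennreal (A powr Q) * (indicator {h. \<bar>h\<bar> \<le> 1} h * ennreal (\<bar>h\<bar> powr (b - 1)))"
    for h
  proof (cases "h \<noteq> 0 \<and> \<bar>h\<bar> \<le> 1")
    case True
    have "epow (Lp_qnorm p (fdiff ?m h f)) Q \<le> ennreal ((A * \<bar>h\<bar> ^ ?m) powr Q)"
      using epow_mono[OF \<open>Q > 0\<close> diff] True assms(4) by (simp add: epow_ennreal)
    then have "ennreal (\<bar>h\<bar> powr (- s * Q) / \<bar>h\<bar>) * epow (Lp_qnorm p (fdiff ?m h f)) Q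
        \<le> ennreal (\<bar>h\<bar> powr (- s * Q) / \<bar>h\<bar>) * ennreal ((A * \<bar>h\<bar> ^ ?m) powr Q)"
      by (rule mult_left_mono) simp
    also have "\<dots> = ennreal (\<bar>h\<bar> powr (- s * Q) / \<bar>h\<bar> * (A * \<bar>h\<bar> ^ ?m) powr Q)"
      by (rule ennreal_mult'[symmetric]) simp
    also have "\<dots> = ennreal (A powr Q) * ennreal (\<bar>h\<bar> powr (b - 1))"
      by (subst powr_weight_mult_eq) (use True assms(4) in \<open>simp_all add: b_def ennreal_mult\<close>)
    finally show ?thesis
      using True by simp
  qed auto
  have "(\<integral>\<^sup>+h. ?F h \<partial>lborel)
      \<le> (\<integral>\<^sup>+h. ennreal (A powr Q) * (indicator {h. \<bar>h\<bar> \<le> 1} h * ennreal (\<bar>h\<bar> powr (b - 1))) \<partial>lborel)"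
    by (rule nn_integral_mono) (rule integrand)
  also have "\<dots> = ennreal (A powr Q) * ennreal (2 / b)"
    by (simp add: nn_integral_cmult_not_top nn_integral_indicator_abs_powr[OF \<open>b > 0\<close>])
  also have "\<dots> = ennreal (A powr Q * (2 / b))"
    by (rule ennreal_mult'[symmetric]) simp
  finally have "epow (\<integral>\<^sup>+h. ?F h \<partial>lborel) (1 / Q) \<le> epow (ennreal (A powr Q * (2 / b))) (1 / Q)"
    using \<open>Q > 0\<close> by (intro epow_mono) auto
  also have "\<dots> = ennreal ((A powr Q * (2 / b)) powr (1 / Q))"
    using \<open>b > 0\<close> by (intro epow_ennreal) simp
  also have "(A powr Q * (2 / b)) powr (1 / Q) = A * (2 / b) powr (1 / Q)"
    using \<open>Q > 0\<close> \<open>b > 0\<close> assms(4) by (subst powr_mult) (simp_all add: powr_powr)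
  finally show ?thesis
    unfolding besov_qnorm_def b_def Q_def using assms(2,3) by (auto intro: add_mono)
qed

lemma psi_series_besov_bounded:
  assumes adm: "admissible_psi \<psi>" and "p > 0" "q > 0"
  obtains K where "K \<ge> 0" "\<And>c. lp_qnorm p c \<le> 1 \<Longrightarrow> besov_qnorm p q s (psi_series \<psi> c) \<le> ennreal K"
proof -
  let ?m = "besov_m s"
  have support: "\<And>y. 1 < \<bar>y\<bar> \<Longrightarrow> \<psi> y = 0"
    using admissible_psi_eq_0[OF adm] .
  obtain B0 where "B0 \<ge> 0" and B0: "\<And>x. \<bar>(deriv ^^ 0) \<psi> x\<bar> \<le> B0"
    using admissible_psi_deriv_bounded[OF adm] by blast
  obtain Bm where "Bm \<ge> 0" and Bm: "\<And>x. \<bar>(deriv ^^ (?m + 0)) \<psi> x\<bar> \<le> Bm"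
    using admissible_psi_deriv_bounded[OF adm] by fastforce
  define A0 where "A0 = B0 * 3 * 2 powr (1 / p)"
  define A where "A = Bm * (2 * real ?m + 3) * (2 * real ?m + 2) powr (1 / p)"
  have "A \<ge> 0"
    using \<open>Bm \<ge> 0\<close> by (simp add: A_def)
  \<comment> \<open>the case \<open>n = 0\<close> of the difference bound, \<open>fdiff 0 h\<close> being the identity\<close>
  have L0: "Lp_qnorm p (psi_series \<psi> c) \<le> ennreal A0" if "lp_qnorm p c \<le> 1" for c
    using Lp_qnorm_fdiff_psi_series_le[of \<psi> p 0 c 0 B0] support that B0 assms(2)
    by (simp add: A0_def)
  have Lm: "Lp_qnorm p (fdiff ?m h (psi_series \<psi> c)) \<le> ennreal (A * \<bar>h\<bar> ^ ?m)"
    if "lp_qnorm p c \<le> 1" "\<bar>h\<bar> \<le> 1" for c h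
    using Lp_qnorm_fdiff_psi_series_le[of \<psi> p h c ?m "\<bar>h\<bar> ^ ?m * Bm"] support that assms(2)
      abs_fdiff_le[of \<psi> ?m 0 Bm h, OF admissible_psi_has_derivative[OF adm] Bm]
    by (simp add: A_def mult_ac)
  show ?thesis
  proof (cases "q = \<infinity>")
    case True
    show ?thesis
      using besov_qnorm_top_le[OF L0 \<open>A \<ge> 0\<close> Lm] \<open>B0 \<ge> 0\<close> \<open>A \<ge> 0\<close> True
      by (intro that[of "A0 + A"]) (simp_all add: A0_def)
  next
    case False
    define F where "F = (2 / ((real ?m - s) * enn2real q)) powr (1 / enn2real q)"
    show ?thesis
      using besov_qnorm_finite_le[OF assms(3) False L0 \<open>A \<ge> 0\<close> Lm] \<open>B0 \<ge> 0\<close> \<open>A \<ge> 0\<close>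
      by (intro that[of "A0 + A * F"]) (simp_all add: A0_def F_def)
  qed
qed

lemma psi_series_in_besov_space:
  assumes "admissible_psi \<psi>" "besov_qnorm p q s (psi_series \<psi> c) < \<infinity>"
  shows "psi_series \<psi> c \<in> besov_space p q s"
  using psi_series_measurable[OF admissible_psi_eq_0 admissible_psi_measurable] assms
  by (simp add: besov_space_def)

lemma translate_in_besov_space:
  assumes "p > 0" "admissible_psi \<psi>"
    and K: "\<And>c. lp_qnorm p c \<le> 1 \<Longrightarrow> besov_qnorm p q s (psi_series \<psi> c) \<le> ennreal K"
  shows "besov_qnorm p q s (\<lambda>x. \<psi> (x - real_of_int z)) \<le> ennreal K"
    and "(\<lambda>x. \<psi> (x - real_of_int z)) \<in> besov_space p q s"
proof -
  show le: "besov_qnorm p q s (\<lambda>x. \<psi> (x - real_of_int z)) \<le> ennreal K"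
    using K[of "\<lambda>w. if w = z then 1 else 0"] assms(1) by (simp add: lp_qnorm_delta psi_series_delta)
  then show "(\<lambda>x. \<psi> (x - real_of_int z)) \<in> besov_space p q s"
    using psi_series_in_besov_space[OF assms(2), of p q s "\<lambda>w. if w = z then 1 else 0"]
    by (simp add: psi_series_delta le_less_trans)
qed

section \<open>Multipliers\<close>

lemma Lp_qnorm_cmult:
  assumes "p > 0"
  shows "Lp_qnorm p (\<lambda>x. t * f x) = ennreal \<bar>t\<bar> * Lp_qnorm p f"
proof -
  have "(\<integral>\<^sup>+x. ennreal (\<bar>t * f x\<bar> powr p) \<partial>lborel)
      = (\<integral>\<^sup>+x. ennreal (\<bar>t\<bar> powr p) * ennreal (\<bar>f x\<bar> powr p) \<partial>lborel)"
    by (simp add: abs_mult powr_mult ennreal_mult)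
  also have "\<dots> = ennreal (\<bar>t\<bar> powr p) * (\<integral>\<^sup>+x. ennreal (\<bar>f x\<bar> powr p) \<partial>lborel)"
    by (simp add: nn_integral_cmult_not_top)
  finally show ?thesis
    unfolding Lp_qnorm_def using assms by (simp add: epow_mult epow_ennreal powr_powr)
qed

lemma besov_qnorm_cmult:
  assumes "p > 0" "q > 0"
  shows "besov_qnorm p q s (\<lambda>x. t * f x) = ennreal \<bar>t\<bar> * besov_qnorm p q s f"
proof -
  let ?L = "\<lambda>h. Lp_qnorm p (fdiff (besov_m s) h f)"
  let ?T = "ennreal \<bar>t\<bar>"
  have L: "Lp_qnorm p (fdiff (besov_m s) h (\<lambda>x. t * f x)) = ?T * ?L h" for h
    unfolding fdiff_cmult by (rule Lp_qnorm_cmult[OF assms(1)])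
  show ?thesis
  proof (cases "q = \<infinity>")
    case True
    have "(SUP h \<in> {h. 0 < \<bar>h\<bar> \<and> \<bar>h\<bar> \<le> 1}. ennreal (\<bar>h\<bar> powr (- s)) * (?T * ?L h))
        = ?T * (SUP h \<in> {h. 0 < \<bar>h\<bar> \<and> \<bar>h\<bar> \<le> 1}. ennreal (\<bar>h\<bar> powr (- s)) * ?L h)"
      by (simp add: SUP_mult_left_ennreal[symmetric] mult.left_commute)
    then show ?thesis
      using True assms(1) by (simp add: besov_qnorm_def L Lp_qnorm_cmult distrib_left)
  next
    case False
    define Q where "Q = enn2real q"
    have "Q > 0"
      using assms(2) False by (simp add: Q_def enn2real_positive_iff less_top)
    let ?W = "\<lambda>h. indicator {h. \<bar>h\<bar> \<le> 1} h * ennreal (\<bar>h\<bar> powr (- s * Q) / \<bar>h\<bar>)"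
    have "(\<integral>\<^sup>+h. ?W h * epow (?T * ?L h) Q \<partial>lborel)
        = (\<integral>\<^sup>+h. ennreal (\<bar>t\<bar> powr Q) * (?W h * epow (?L h) Q) \<partial>lborel)"
      using \<open>Q > 0\<close> by (simp add: epow_mult epow_ennreal mult.left_commute)
    also have "\<dots> = ennreal (\<bar>t\<bar> powr Q) * (\<integral>\<^sup>+h. ?W h * epow (?L h) Q \<partial>lborel)"
      by (simp add: nn_integral_cmult_not_top)
    finally show ?thesis
      using False \<open>Q > 0\<close> assms(1)
      by (simp add: besov_qnorm_def Q_def[symmetric] L Lp_qnorm_cmult epow_mult epow_ennreal
          powr_powr distrib_left)
  qed
qed

lemma besov_space_cmult:
  assumes "p > 0" "q > 0" "f \<in> besov_space p q s"
  shows "(\<lambda>x. t * f x) \<in> besov_space p q s"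
  using assms by (auto simp: besov_space_def besov_qnorm_cmult ennreal_mult_less_top)

lemma mult_qnorm_mult_le:
  assumes hom: "\<And>t f. N (\<lambda>x. t * f x) = ennreal \<bar>t\<bar> * N f"
    and closed: "\<And>t f. f \<in> X \<Longrightarrow> (\<lambda>x. t * f x) \<in> X"
    and "mult_qnorm X N g < \<infinity>" "f \<in> X" "N f < \<infinity>"
  shows "N (\<lambda>x. g x * f x) \<le> mult_qnorm X N g * N f"
proof -
  let ?M = "mult_qnorm X N g"
  have scaled: "ennreal t * N (\<lambda>x. g x * f x) \<le> ?M" if "t > 0" "ennreal t * N f \<le> 1" for t
  proof -
    have "N (\<lambda>x. g x * (t * f x)) \<le> ?M"
      unfolding mult_qnorm_def by (rule SUP_upper) (use that closed hom \<open>f \<in> X\<close> in auto)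
    then show ?thesis
      using hom[of t "\<lambda>x. g x * f x"] that by (simp add: mult.left_commute)
  qed
  obtain v where v: "N f = ennreal v" "v \<ge> 0"
    using \<open>N f < \<infinity>\<close> by (cases "N f") auto
  show ?thesis
  proof (cases "v = 0")
    case True
    then have "N (\<lambda>x. g x * f x) = 0"
      using scaled v \<open>?M < \<infinity>\<close> by (intro ennreal_eq_0_of_mult_le) auto
    then show ?thesis
      by simp
  next
    case False
    then have "ennreal (1 / v) * N (\<lambda>x. g x * f x) \<le> ?M"
      using v by (intro scaled) (auto simp: ennreal_mult''[symmetric])
    then have "ennreal v * (ennreal (1 / v) * N (\<lambda>x. g x * f x)) \<le> ennreal v * ?M"
      by (rule mult_left_mono) simp
    then show ?thesis
      using v False by (simp add: mult.assoc[symmetric] ennreal_mult''[symmetric] mult.commute)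
  qed
qed

context
  fixes p s :: real and q :: ennreal and g :: "real \<Rightarrow> real"
  assumes p: "p > 0" and q: "q > 0"
    and g: "g \<in> mult_space (besov_space p q s) (besov_qnorm p q s)"
begin

lemma besov_qnorm_mult_le:
  assumes "f \<in> besov_space p q s"
  shows "besov_qnorm p q s (\<lambda>x. g x * f x)
    \<le> mult_qnorm (besov_space p q s) (besov_qnorm p q s) g * besov_qnorm p q s f"
  using g assms
  by (intro mult_qnorm_mult_le besov_qnorm_cmult besov_space_cmult p q)
     (auto simp: mult_space_def besov_space_def)

lemma besov_space_mult:
  assumes "f \<in> besov_space p q s"
  shows "(\<lambda>x. g x * f x) \<in> besov_space p q s"
proof -
  have "besov_qnorm p q s (\<lambda>x. g x * f x) < \<infinity>"
    using besov_qnorm_mult_le[OF assms] g assms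
    by (auto simp: mult_space_def besov_space_def ennreal_mult_less_top intro: le_less_trans)
  then show ?thesis
    using g assms by (auto simp: mult_space_def besov_space_def)
qed

lemma besov_space_power_mult:
  assumes "f \<in> besov_space p q s"
  shows "(\<lambda>x. g x ^ k * f x) \<in> besov_space p q s"
proof (induction k)
  case (Suc k)
  then show ?case
    using besov_space_mult[OF Suc] by (simp add: mult.assoc)
qed (use assms in simp)

lemma besov_qnorm_power_mult_le:
  assumes "f \<in> besov_space p q s"
  shows "besov_qnorm p q s (\<lambda>x. g x ^ k * f x)
    \<le> mult_qnorm (besov_space p q s) (besov_qnorm p q s) g ^ k * besov_qnorm p q s f"
proof (induction k)
  case (Suc k)
  have "besov_qnorm p q s (\<lambda>x. g x ^ Suc k * f x)
      \<le> mult_qnorm (besov_space p q s) (besov_qnorm p q s) g * besov_qnorm p q s (\<lambda>x. g x ^ k * f x)"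
    using besov_qnorm_mult_le[OF besov_space_power_mult[OF assms]] by (simp add: mult.assoc)
  also have "\<dots> \<le> mult_qnorm (besov_space p q s) (besov_qnorm p q s) g ^ Suc k * besov_qnorm p q s f"
    using Suc by (simp add: mult_left_mono mult.assoc)
  finally show ?case .
qed simp

end

lemma AE_eq_0_of_power_mult_Lp_bounded:
  fixes g \<phi> :: "real \<Rightarrow> real"
  assumes [measurable]: "g \<in> borel_measurable lborel" "\<phi> \<in> borel_measurable lborel"
    and "p > 0" "0 \<le> m" "m < r" "K \<ge> 0"
    and bound: "\<And>k. Lp_qnorm p (\<lambda>x. g x ^ k * \<phi> x) \<le> ennreal (m ^ k * K)"
  shows "AE x in lborel. r < \<bar>g x\<bar> \<longrightarrow> \<phi> x = 0"
proof -
  let ?h = "\<lambda>x. indicator {x. r < \<bar>g x\<bar>} x * ennreal (\<bar>\<phi> x\<bar> powr p)"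
  define J where "J = (\<integral>\<^sup>+x. ?h x \<partial>lborel)"
  have "r > 0"
    using assms(4,5) by linarith
  have J_le: "ennreal ((r powr p) ^ k) * J \<le> ennreal ((m powr p) ^ k * K powr p)" for k
  proof -
    have pointwise: "ennreal ((r powr p) ^ k) * ?h x \<le> ennreal (\<bar>g x ^ k * \<phi> x\<bar> powr p)" for x
    proof (cases "r < \<bar>g x\<bar>")
      case True
      then have "(r powr p) ^ k \<le> (\<bar>g x\<bar> powr p) ^ k"
        using \<open>r > 0\<close> assms(3) by (intro power_mono powr_mono2) auto
      then have "(r powr p) ^ k * \<bar>\<phi> x\<bar> powr p \<le> \<bar>g x ^ k * \<phi> x\<bar> powr p"
        by (simp add: abs_mult power_abs powr_mult power_powr mult_right_mono)
      then show ?thesis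
        using True by (simp add: ennreal_mult'[symmetric] ennreal_leI)
    qed simp
    have "ennreal ((r powr p) ^ k) * J = (\<integral>\<^sup>+x. ennreal ((r powr p) ^ k) * ?h x \<partial>lborel)"
      unfolding J_def by (simp add: nn_integral_cmult_not_top)
    also have "\<dots> \<le> (\<integral>\<^sup>+x. ennreal (\<bar>g x ^ k * \<phi> x\<bar> powr p) \<partial>lborel)"
      by (intro nn_integral_mono pointwise)
    also have "\<dots> = epow (Lp_qnorm p (\<lambda>x. g x ^ k * \<phi> x)) p"
      using assms(3) by (simp add: Lp_qnorm_def epow_epow)
    also have "\<dots> \<le> epow (ennreal (m ^ k * K)) p"
      using assms(3) bound by (rule epow_mono)
    also have "\<dots> = ennreal ((m powr p) ^ k * K powr p)"
      using assms(4,6) by (simp add: epow_ennreal powr_mult power_powr)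
    finally show ?thesis .
  qed
  obtain j where j: "J = ennreal j" "j \<ge> 0"
    using J_le[of 0] by (cases J) (auto simp: top_unique)
  have "j \<le> ((m powr p) / (r powr p)) ^ k * K powr p" for k
  proof -
    have "(r powr p) ^ k * j \<le> (m powr p) ^ k * K powr p"
      using J_le[of k] j by (simp add: ennreal_mult'[symmetric])
    then show ?thesis
      using \<open>r > 0\<close> by (simp add: power_divide field_simps)
  qed
  then have "j \<le> 0"
    using assms(3-5)
    by (intro le_0_of_le_geometric[of "m powr p / r powr p"]) (auto intro: powr_less_mono2)
  then have "AE x in lborel. ?h x = 0"
    using j by (simp add: J_def nn_integral_0_iff_AE)
  then show ?thesis
    using assms(3) by eventually_elim (simp split: split_indicator)
qed

lemma mult_space_AE_bounded:
  assumes adm: "admissible_psi \<psi>" and p: "p > 0" and q: "q > 0"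
    and g: "g \<in> mult_space (besov_space p q s) (besov_qnorm p q s)"
  shows "AE x in lborel. \<bar>g x\<bar> \<le> enn2real (mult_qnorm (besov_space p q s) (besov_qnorm p q s) g) + 1"
proof -
  let ?M = "mult_qnorm (besov_space p q s) (besov_qnorm p q s) g"
  define m where "m = enn2real ?M"
  have M: "?M = ennreal m" "m \<ge> 0"
    using g by (auto simp: m_def mult_space_def less_top)
  obtain K where "K \<ge> 0" and K: "\<And>c. lp_qnorm p c \<le> 1 \<Longrightarrow> besov_qnorm p q s (psi_series \<psi> c) \<le> ennreal K"
    using psi_series_besov_bounded[OF adm p q] by blast
  have [measurable]: "g \<in> borel_measurable lborel" "\<psi> \<in> borel_measurable borel"
    using g admissible_psi_measurable[OF adm] by (auto simp: mult_space_def)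
  have vanish: "AE x in lborel. m + 1 < \<bar>g x\<bar> \<longrightarrow> \<psi> (x - real_of_int z) = 0" for z
  proof (rule AE_eq_0_of_power_mult_Lp_bounded[where K = K])
    let ?\<psi>z = "\<lambda>x. \<psi> (x - real_of_int z)"
    have \<psi>z: "besov_qnorm p q s ?\<psi>z \<le> ennreal K" "?\<psi>z \<in> besov_space p q s"
      using translate_in_besov_space[of p \<psi> q s K z] p adm K by blast+
    show "Lp_qnorm p (\<lambda>x. g x ^ k * ?\<psi>z x) \<le> ennreal (m ^ k * K)" for k
    proof -
      have "Lp_qnorm p (\<lambda>x. g x ^ k * ?\<psi>z x) \<le> besov_qnorm p q s (\<lambda>x. g x ^ k * ?\<psi>z x)"
        by (simp add: besov_qnorm_def)
      also have "\<dots> \<le> ?M ^ k * besov_qnorm p q s ?\<psi>z"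
        by (rule besov_qnorm_power_mult_le[OF p q g \<psi>z(2)])
      also have "\<dots> \<le> ?M ^ k * ennreal K"
        using \<psi>z(1) by (rule mult_left_mono) simp
      also have "\<dots> = ennreal (m ^ k * K)"
        using M \<open>K \<ge> 0\<close> by (simp add: ennreal_power ennreal_mult)
      finally show ?thesis .
    qed
  qed (use p M \<open>K \<ge> 0\<close> in auto)
  have "AE x in lborel. \<forall>z::int. m + 1 < \<bar>g x\<bar> \<longrightarrow> \<psi> (x - real_of_int z) = 0"
    unfolding AE_all_countable using vanish by blast
  then show ?thesis
  proof eventually_elim
    case (elim x)
    obtain z :: int where "\<psi> (x - real_of_int z) \<noteq> 0"
      using admissible_psi_translate_nonzero[OF adm] by blast
    then show ?case
      using elim by (force simp: m_def)
  qed
qed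

lemma mult_space_subset_L1_loc:
  assumes "admissible_psi \<psi>" "p > 0" "q > 0"
  shows "mult_space (besov_space p q s) (besov_qnorm p q s) \<subseteq> L1_loc"
proof
  fix g
  assume g: "g \<in> mult_space (besov_space p q s) (besov_qnorm p q s)"
  define M where "M = enn2real (mult_qnorm (besov_space p q s) (besov_qnorm p q s) g) + 1"
  have [measurable]: "g \<in> borel_measurable lborel"
    using g by (simp add: mult_space_def)
  have bounded: "AE x in lborel. \<bar>g x\<bar> \<le> M"
    unfolding M_def using mult_space_AE_bounded[OF assms g] .
  have "set_integrable lborel {a..b} g" for a b
    unfolding set_integrable_def
  proof (rule Bochner_Integration.integrable_bound)
    show "integrable lborel (\<lambda>x. indicator {a..b} x * M)"
      using emeasure_lborel_cbox_finite[of a b]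
      by (intro integrable_mult_left integrable_real_indicator) (simp_all add: cbox_interval)
    show "AE x in lborel. norm (indicator {a..b} x *\<^sub>R g x) \<le> norm (indicator {a..b} x * M)"
      using bounded by eventually_elim (auto simp: indicator_def)
  qed measurable
  then show "g \<in> L1_loc"
    by (simp add: L1_loc_def)
qed

lemma Ms_qnorm_le_mult_qnorm:
  assumes "p > 0" "q > 0" "g \<in> mult_space (besov_space p q s) (besov_qnorm p q s)"
    and "admissible_psi \<psi>"
    and K: "\<And>c. lp_qnorm p c \<le> 1 \<Longrightarrow> besov_qnorm p q s (psi_series \<psi> c) \<le> ennreal K"
  shows "Ms_qnorm \<psi> p q s g \<le> ennreal K * mult_qnorm (besov_space p q s) (besov_qnorm p q s) g"
  unfolding Ms_qnorm_def psi_series_def[symmetric]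
proof (rule SUP_least)
  fix c
  assume "c \<in> {c. lp_qnorm p c \<le> 1}"
  then have c: "lp_qnorm p c \<le> 1"
    by simp
  have "psi_series \<psi> c \<in> besov_space p q s"
    using K[OF c] by (intro psi_series_in_besov_space assms(4)) (simp add: le_less_trans)
  then have "besov_qnorm p q s (\<lambda>x. g x * psi_series \<psi> c x)
      \<le> mult_qnorm (besov_space p q s) (besov_qnorm p q s) g * besov_qnorm p q s (psi_series \<psi> c)"
    by (rule besov_qnorm_mult_le[OF assms(1-3)])
  also have "\<dots> \<le> mult_qnorm (besov_space p q s) (besov_qnorm p q s) g * ennreal K"
    using K[OF c] by (rule mult_left_mono) simp
  finally show "besov_qnorm p q s (\<lambda>x. g x * psi_series \<psi> c x)
      \<le> ennreal K * mult_qnorm (besov_space p q s) (besov_qnorm p q s) g"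
    by (simp add: mult.commute)
qed

lemma unif_qnorm_le_Ms_qnorm:
  assumes "p > 0"
  shows "unif_qnorm \<psi> p q s f \<le> Ms_qnorm \<psi> p q s f"
  unfolding unif_qnorm_def
proof (rule SUP_least)
  fix z :: int
  have "besov_qnorm p q s (\<lambda>x. f x * psi_series \<psi> (\<lambda>w. if w = z then 1 else 0) x) \<le> Ms_qnorm \<psi> p q s f"
    unfolding Ms_qnorm_def psi_series_def[symmetric]
    by (rule SUP_upper) (simp add: lp_qnorm_delta assms)
  then show "besov_qnorm p q s (\<lambda>x. f x * \<psi> (x - real_of_int z)) \<le> Ms_qnorm \<psi> p q s f"
    by (simp add: psi_series_delta)
qed

lemma cont_embed_mult_space_Ms_space:
  assumes "p > 0" "q > 0" "admissible_psi \<psi>"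
  shows "cont_embed (mult_space (besov_space p q s) (besov_qnorm p q s))
    (mult_qnorm (besov_space p q s) (besov_qnorm p q s)) (Ms_space \<psi> p q s) (Ms_qnorm \<psi> p q s)"
proof -
  let ?X = "besov_space p q s" and ?N = "besov_qnorm p q s"
  obtain K where "K \<ge> 0" and K: "\<And>c. lp_qnorm p c \<le> 1 \<Longrightarrow> ?N (psi_series \<psi> c) \<le> ennreal K"
    using psi_series_besov_bounded[OF assms(3,1,2)] by blast
  have Ms_le: "Ms_qnorm \<psi> p q s g \<le> ennreal K * mult_qnorm ?X ?N g" if "g \<in> mult_space ?X ?N" for g
    using Ms_qnorm_le_mult_qnorm[OF assms(1,2) that assms(3) K] .
  have "mult_space ?X ?N \<subseteq> Ms_space \<psi> p q s"
  proof
    fix g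
    assume g: "g \<in> mult_space ?X ?N"
    then have "Ms_qnorm \<psi> p q s g < \<infinity>"
      using Ms_le[OF g] by (auto simp: mult_space_def ennreal_mult_less_top intro: le_less_trans)
    then show "g \<in> Ms_space \<psi> p q s"
      using mult_space_subset_L1_loc[OF assms(3,1,2)] g by (auto simp: Ms_space_def)
  qed
  then show ?thesis
    unfolding cont_embed_def using Ms_le \<open>K \<ge> 0\<close> by blast
qed

lemma cont_embed_Ms_space_unif_space:
  assumes "p > 0"
  shows "cont_embed (Ms_space \<psi> p q s) (Ms_qnorm \<psi> p q s) (unif_space \<psi> p q s) (unif_qnorm \<psi> p q s)"
  unfolding cont_embed_def using le_less_trans[OF unif_qnorm_le_Ms_qnorm[OF assms]]
  by (intro conjI exI[of _ 1])
     (auto simp: Ms_space_def unif_space_def unif_qnorm_le_Ms_qnorm[OF assms])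

theorem lemma2p13:
  fixes p s :: real and q :: ennreal and \<psi> :: "real \<Rightarrow> real"
  assumes "0 < p" and "0 < q" and "s > max 0 (1 / p - 1)" and "admissible_psi \<psi>"
  shows "cont_embed (mult_space (besov_space p q s) (besov_qnorm p q s))
                    (mult_qnorm (besov_space p q s) (besov_qnorm p q s))
                    (Ms_space \<psi> p q s) (Ms_qnorm \<psi> p q s)
       \<and> cont_embed (Ms_space \<psi> p q s) (Ms_qnorm \<psi> p q s)
                    (unif_space \<psi> p q s) (unif_qnorm \<psi> p q s)"
  using cont_embed_mult_space_Ms_space[OF assms(1,2,4)] cont_embed_Ms_space_unif_space[OF assms(1)]
  by blast

end
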